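(* Let $t\ge0$ and let ${\bf n}^*$ be the map ${\bf n}^*(x,y,z)=(\cos\theta(z)\cos(tz),\cos\theta(z)\sin(tz),\sin\theta(z))$, where $\theta$ solves $\theta''=t^2\cos\theta\sin\theta$ on $(0,1)$ with $\theta(0)=0$, $\theta(1)=\pi/2$ and $\theta$ given by $\int_0^{\theta(z)}(D-t^2\cos^2u)^{-1/2}du=z$ with $D>t^2$ determined by $\int_0^{\pi/2}(D-t^2\cos^2u)^{-1/2}du=1$. Let $\lambda:=|\nabla{\bf n}^*|^2+2t\,{\bf n}^*\cdot\nabla\times{\bf n}^*$. Then for every ${\bf n}\in\mathcal{A}$, $$I({\bf n})-I({\bf n}^* )=H({\bf n}-{\bf n}^* ),\qquad H({\bf v}):=\int_\Omega|\nabla{\bf v}|^2+2t\,{\bf v}\cdot\nabla\times{\bf v}-\lambda|{\bf v}|^2\,dx,$$ where $I({\bf n})=\int_\Omega|\nabla{\bf n}|^2+2t\,{\bf n}\cdot\nabla\times{\bf n}+t^2\,dx$.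
   Context: $\Omega=(-L_1,L_1)\times(-L_2,L_2)\times(0,1)$ with $L_1,L_2>0$, and $$\mathcal{A}=\{{\bf n}\in W^{1,2}(\Omega,\mathbb{S}^2):\ {\bf n}|_{z=0}={\bf e}_1,\ {\bf n}|_{z=1}={\bf e}_3,\ {\bf n}|_{x=-L_1}={\bf n}|_{x=L_1},\ {\bf n}|_{y=-L_2}={\bf n}|_{y=L_2}\},$$ $W^{1,2}(\Omega,\mathbb{S}^2)$ being the $W^{1,2}(\Omega,\mathbb{R}^3)$ maps with $|{\bf n}|=1$ a.e. *)

theory Defs
  imports "HOL-Analysis.Analysis"
begin

definition Omega :: "real \<Rightarrow> real \<Rightarrow> (real^3) set" where
  "Omega L1 L2 = {p. -L1 < p$1 \<and> p$1 < L1 \<and> -L2 < p$2 \<and> p$2 < L2 \<and> 0 < p$3 \<and> p$3 < 1}"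

definition pd :: "3 \<Rightarrow> (real^3 \<Rightarrow> real) \<Rightarrow> real^3 \<Rightarrow> real" where
  "pd k f x = deriv (\<lambda>s. f (x + s *\<^sub>R axis k 1)) 0"

definition C1_fun :: "(real^3 \<Rightarrow> real) \<Rightarrow> bool" where
  "C1_fun \<phi> \<longleftrightarrow> (\<forall>k x. (\<lambda>s. \<phi> (x + s *\<^sub>R axis k 1)) differentiable (at 0))
                 \<and> (\<forall>k. continuous_on UNIV (pd k \<phi>))"

text \<open>Dn k i is the weak partial derivative d/dx_k of the i-th component of n on Omega;
  n and Dn are in L^2(Omega), i.e. n is in W^{1,2}(Omega, R^3).\<close>
definition weak_grad :: "real \<Rightarrow> real \<Rightarrow> (real^3 \<Rightarrow> real^3) \<Rightarrow> (3 \<Rightarrow> 3 \<Rightarrow> real^3 \<Rightarrow> real) \<Rightarrow> bool" where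
  "weak_grad L1 L2 n Dn \<longleftrightarrow>
     (\<forall>i. set_borel_measurable lebesgue (Omega L1 L2) (\<lambda>x. n x $ i)
          \<and> set_integrable lebesgue (Omega L1 L2) (\<lambda>x. (n x $ i)^2))
   \<and> (\<forall>k i. set_borel_measurable lebesgue (Omega L1 L2) (Dn k i)
          \<and> set_integrable lebesgue (Omega L1 L2) (\<lambda>x. (Dn k i x)^2))
   \<and> (\<forall>\<phi>. C1_fun \<phi> \<and> (\<exists>K. compact K \<and> K \<subseteq> Omega L1 L2 \<and> (\<forall>x. x \<notin> K \<longrightarrow> \<phi> x = 0)) \<longrightarrow>
         (\<forall>k i. (LINT x:Omega L1 L2|lebesgue. n x $ i * pd k \<phi> x)
                = - (LINT x:Omega L1 L2|lebesgue. Dn k i x * \<phi> x)))"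

definition face_int :: "real \<Rightarrow> real \<Rightarrow> (real^3 \<Rightarrow> real) \<Rightarrow> real \<Rightarrow> real" where
  "face_int L1 L2 f c = integral {-L1..L1} (\<lambda>x. integral {-L2..L2} (\<lambda>y. f (vector [x, y, c])))"

text \<open>The admissible class A: n in W^{1,2}(Omega,S^2) (with weak gradient Dn), trace e1 on z=0,
  trace e3 on z=1, equal traces on x=-L1/x=L1 and on y=-L2/y=L2.  The trace conditions are
  expressed by the Gauss-Green formula tested against all C^1 functions on R^3 that are
  2L1-periodic in x and 2L2-periodic in y.\<close>
definition in_A :: "real \<Rightarrow> real \<Rightarrow> (real^3 \<Rightarrow> real^3) \<Rightarrow> (3 \<Rightarrow> 3 \<Rightarrow> real^3 \<Rightarrow> real) \<Rightarrow> bool" where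
  "in_A L1 L2 n Dn \<longleftrightarrow> weak_grad L1 L2 n Dn
   \<and> (AE x in lebesgue. x \<in> Omega L1 L2 \<longrightarrow> norm (n x) = 1)
   \<and> (\<forall>\<phi>. C1_fun \<phi> \<and> (\<forall>x. \<phi> (x + (2*L1) *\<^sub>R axis 1 1) = \<phi> x)
              \<and> (\<forall>x. \<phi> (x + (2*L2) *\<^sub>R axis 2 1) = \<phi> x) \<longrightarrow>
        (\<forall>i. (LINT x:Omega L1 L2|lebesgue. n x $ i * pd 1 \<phi> x + Dn 1 i x * \<phi> x) = 0
           \<and> (LINT x:Omega L1 L2|lebesgue. n x $ i * pd 2 \<phi> x + Dn 2 i x * \<phi> x) = 0
           \<and> (LINT x:Omega L1 L2|lebesgue. n x $ i * pd 3 \<phi> x + Dn 3 i x * \<phi> x)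
               = face_int L1 L2 (\<lambda>p. (axis 3 1 :: real^3) $ i * \<phi> p) 1
                 - face_int L1 L2 (\<lambda>p. (axis 1 1 :: real^3) $ i * \<phi> p) 0))"

definition gradsq :: "(3 \<Rightarrow> 3 \<Rightarrow> real^3 \<Rightarrow> real) \<Rightarrow> real^3 \<Rightarrow> real" where
  "gradsq Dv x = (\<Sum>k\<in>UNIV. \<Sum>i\<in>UNIV. (Dv k i x)^2)"

definition curl :: "(3 \<Rightarrow> 3 \<Rightarrow> real^3 \<Rightarrow> real) \<Rightarrow> real^3 \<Rightarrow> real^3" where
  "curl Dv x = vector [Dv 2 3 x - Dv 3 2 x, Dv 3 1 x - Dv 1 3 x, Dv 1 2 x - Dv 2 1 x]"

definition Ifun :: "real \<Rightarrow> real \<Rightarrow> real \<Rightarrow> (real^3 \<Rightarrow> real^3) \<Rightarrow> (3 \<Rightarrow> 3 \<Rightarrow> real^3 \<Rightarrow> real) \<Rightarrow> real" where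
  "Ifun L1 L2 t n Dn = (LINT x:Omega L1 L2|lebesgue. gradsq Dn x + 2 * t * (n x \<bullet> curl Dn x) + t^2)"

definition Hfun :: "real \<Rightarrow> real \<Rightarrow> real \<Rightarrow> (real^3 \<Rightarrow> real) \<Rightarrow> (real^3 \<Rightarrow> real^3) \<Rightarrow> (3 \<Rightarrow> 3 \<Rightarrow> real^3 \<Rightarrow> real) \<Rightarrow> real" where
  "Hfun L1 L2 t lam v Dv = (LINT x:Omega L1 L2|lebesgue. gradsq Dv x + 2 * t * (v x \<bullet> curl Dv x) - lam x * (norm (v x))^2)"

definition nstar :: "real \<Rightarrow> (real \<Rightarrow> real) \<Rightarrow> real^3 \<Rightarrow> real^3" where
  "nstar t \<theta> p = vector [cos (\<theta> (p$3)) * cos (t * p$3), cos (\<theta> (p$3)) * sin (t * p$3), sin (\<theta> (p$3))]"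

definition cgrad :: "(real^3 \<Rightarrow> real^3) \<Rightarrow> 3 \<Rightarrow> 3 \<Rightarrow> real^3 \<Rightarrow> real" where
  "cgrad f k i x = pd k (\<lambda>p. f p $ i) x"

end

(*
  Write m for n*, e(n) for the energy density |grad n|^2 + 2t n.curl n and lam = e(m).
  Since |m| = 1, the density of H(n - m) equals e(n) - e(m) - 2 W - lam (|n|^2 - 1) pointwise,
  where W is the first-variation density of the functional  int e - lam |.|^2  at m in the
  direction n. The last term vanishes a.e. because |n| = 1, so the identity reduces to
  int W = 0: m is a weak critical point, tested against n itself.

  As m(x) = N(z) depends on z only, W is a sum of pairings of n and grad n with functions of z.
  Such functions are admissible in the trace identities defining A, and the Euler-Lagrange
  equation N'' = 2t e3 x N' - lam N of the reduced one-dimensional problem turns int W into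
  the boundary terms of the flux p = N' - t e3 x N at z = 0 and z = 1; these vanish because
  N(0) = e1, N(1) = e3 and N.N' = 0. The profile of n* solves that equation because theta
  coincides on [0,1] with the inverse of the elliptic integral  w |-> int_0^w (D - t^2 cos^2)^(-1/2),
  a smooth function on all of R with G'' = t^2 cos G sin G.
*)
theory Submission
  imports Defs
begin

unbundle cross3_syntax

lemma inverse_of_primitive:
  fixes f :: "real \<Rightarrow> real"
  assumes cont: "continuous_on UNIV f" and lower: "\<And>u. m \<le> f u" and "0 < m"
  obtains G where "\<And>w::real. G (LBINT u=0..w. f u) = w"
    and "\<And>z. (G has_real_derivative inverse (f (G z))) (at z)"
proof -
  define F where "F = (\<lambda>w::real. LBINT u=0..w. f u)"
  have fpos: "0 < f u" for u using lower[of u] \<open>0 < m\<close> by linarith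
  have F_deriv: "(F has_real_derivative f w) (at w)" for w
  proof -
    have "(F has_vector_derivative f w) (at w within {-\<bar>w\<bar>-1..\<bar>w\<bar>+1})"
      unfolding F_def zero_ereal_def
      by (rule interval_integral_FTC2) (auto intro: continuous_on_subset[OF cont])
    then have "(F has_vector_derivative f w) (at w within {-\<bar>w\<bar>-1<..<\<bar>w\<bar>+1})"
      by (rule has_vector_derivative_within_subset) auto
    then have "(F has_vector_derivative f w) (at w)"
      by (subst (asm) has_vector_derivative_within_open) auto
    then show ?thesis by (simp add: has_real_derivative_iff_has_vector_derivative)
  qed
  have F_cont: "isCont F w" for w using F_deriv DERIV_isCont by blast
  have F_mono: "F a < F b" if "a < b" for a b
    using DERIV_pos_imp_increasing[OF that] F_deriv fpos by blast
  have F_inj: "F a = F b \<Longrightarrow> a = b" for a b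
    using F_mono[of a b] F_mono[of b a] by (cases a b rule: linorder_cases) auto
  have F_growth: "m * (v - w) \<le> F v - F w" if "w \<le> v" for w v
    using DERIV_nonneg_imp_nondecreasing[OF that, of "\<lambda>x. F x - m * x"] lower
    by (fastforce intro!: derivative_eq_intros F_deriv simp: algebra_simps)
  have F_surj: "\<exists>w. F w = z" for z
  proof -
    define b where "b = \<bar>z\<bar> / m + 1"
    have b: "\<bar>z\<bar> < m * b" "0 < b" unfolding b_def using \<open>0 < m\<close> by (auto simp: field_simps)
    have "F 0 = 0" unfolding F_def by (simp add: zero_ereal_def[symmetric])
    then have "F (-b) \<le> z" "z \<le> F b" using F_growth[of 0 b] F_growth[of "-b" 0] b by auto
    then show ?thesis using IVT[of F "-b" z b] F_cont b by auto
  qed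
  define G where "G = (\<lambda>z. SOME w. F w = z)"
  have FG: "F (G z) = z" for z unfolding G_def by (rule someI_ex) (rule F_surj)
  have GF: "G (F w) = w" for w using FG[of "F w"] F_inj by blast
  have G_cont: "isCont G z" for z
    using isCont_inverse_function[where d=1 and f=F and g=G and x="G z"] GF F_cont FG by auto
  have G_deriv: "(G has_real_derivative inverse (f (G z))) (at z)" for z
    by (rule DERIV_inverse_function[where f=F and a="z-1" and b="z+1"])
       (use fpos[of "G z"] in \<open>auto simp: FG G_cont F_deriv\<close>)
  show thesis by (rule that[OF GF[unfolded F_def] G_deriv])
qed

lemma inverse_of_elliptic_integral:
  fixes D t :: real
  assumes "t^2 < D"
  obtains G G' where "\<And>w::real. G (LBINT u=0..w. (D - t^2 * (cos u)^2) powr (-1/2)) = w"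
    and "\<And>z. (G has_real_derivative G' z) (at z)"
    and "\<And>z. (G' has_real_derivative t^2 * cos (G z) * sin (G z)) (at z)"
proof -
  have pos: "0 < D - t^2 * (cos u)^2" for u
  proof -
    have "(cos u)^2 \<le> 1" by (simp add: abs_square_le_1)
    then have "t^2 * (cos u)^2 \<le> t^2" by (simp add: mult_left_le)
    with assms show ?thesis by linarith
  qed
  have "0 < D" using assms zero_le_power2[of t] by linarith
  obtain G where G_inv: "\<And>w::real. G (LBINT u=0..w. (D - t^2 * (cos u)^2) powr (-1/2)) = w"
    and G_deriv: "\<And>z. (G has_real_derivative inverse ((D - t^2 * (cos (G z))^2) powr (-1/2))) (at z)"
  proof (rule inverse_of_primitive)
    show "continuous_on UNIV (\<lambda>u. (D - t^2 * (cos u)^2) powr (-1/2))"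
      using pos by (intro continuous_intros) auto
    show "D powr (-1/2) \<le> (D - t^2 * (cos u)^2) powr (-1/2)" for u
      using pos[of u] by (intro powr_mono2') auto
  qed (use \<open>0 < D\<close> in auto)
  define G' where "G' = (\<lambda>z. sqrt (D - t^2 * (cos (G z))^2))"
  have G'_pos: "0 < G' z" for z unfolding G'_def using pos by simp
  have "(G has_real_derivative G' z) (at z)" for z
    using G_deriv[of z] pos[of "G z"]
    by (simp add: G'_def powr_minus powr_half_sqrt[symmetric])
  moreover have "(G' has_real_derivative t^2 * cos (G z) * sin (G z)) (at z)" for z
  proof -
    have "(G' has_real_derivative
        inverse (G' z) / 2 * (2 * t^2 * cos (G z) * sin (G z) * G' z)) (at z)"
      unfolding G'_def
      by (rule DERIV_chain2[OF DERIV_real_sqrt]) (use pos \<open>(G has_real_derivative G' z) (at z)\<close>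
          in \<open>auto intro!: derivative_eq_intros simp: G'_def\<close>)
    then show ?thesis using G'_pos[of z] by (simp add: field_simps)
  qed
  ultimately show thesis using G_inv that by blast
qed


lemma open_Omega: "open (Omega L1 L2)"
  unfolding Omega_def by (intro open_Collect_conj open_Collect_less continuous_intros)

lemma Omega_subset_cbox: "Omega L1 L2 \<subseteq> cbox (vector [-L1, -L2, 0]) (vector [L1, L2, 1])"
  unfolding Omega_def cbox_def
  by (auto simp: inner_axis forall_3 Basis_vec_def cart_eq_inner_axis[symmetric])

lemma Omega_in_sets_lebesgue: "Omega L1 L2 \<in> sets lebesgue"
proof -
  have "bounded (Omega L1 L2)" using Omega_subset_cbox bounded_cbox bounded_subset by blast
  then show ?thesis using lmeasurable_open[OF _ open_Omega] by (simp add: fmeasurableD)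
qed

lemma set_integrable_mult_if_square_integrable:
  fixes f g :: "_ \<Rightarrow> real"
  assumes "set_borel_measurable M S f" "set_borel_measurable M S g"
    and "set_integrable M S (\<lambda>x. (f x)^2)" "set_integrable M S (\<lambda>x. (g x)^2)"
  shows "set_integrable M S (\<lambda>x. f x * g x)"
proof (rule set_integrable_bound[where f="\<lambda>x. (f x)^2 + (g x)^2"])
  show "set_integrable M S (\<lambda>x. (f x)^2 + (g x)^2)" using assms by simp
  have "(\<lambda>x. indicator S x *\<^sub>R (f x * g x)) = (\<lambda>x. (indicator S x *\<^sub>R f x) * (indicator S x *\<^sub>R g x))"
    by (auto simp: indicator_def)
  then show "set_borel_measurable M S (\<lambda>x. f x * g x)"
    using assms(1,2) unfolding set_borel_measurable_def by simp
  have "norm (a * b) \<le> norm (a^2 + b^2)" for a b :: real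
  proof -
    have "2 * a * b \<le> a^2 + b^2" "2 * (-a) * b \<le> (-a)^2 + b^2" by (rule sum_squares_bound)+
    moreover have "0 \<le> a^2 + b^2" by simp
    ultimately show ?thesis by (simp add: abs_le_iff)
  qed
  then show "AE x in M. x \<in> S \<longrightarrow> norm (f x * g x) \<le> norm ((f x)^2 + (g x)^2)" by simp
qed

lemma continuous_on_fun_of_z:
  "continuous_on UNIV h \<Longrightarrow> continuous_on UNIV (\<lambda>x::real^3. h (x$3))"
  by (rule continuous_on_compose2) (auto intro!: continuous_intros)

lemma set_integrable_fun_of_z:
  fixes h :: "real \<Rightarrow> real"
  assumes "continuous_on UNIV h"
  shows "set_integrable lebesgue (Omega L1 L2) (\<lambda>x. h (x$3))"
proof -
  have "(\<lambda>x::real^3. h (x$3)) absolutely_integrable_on cbox (vector [-L1, -L2, 0]) (vector [L1, L2, 1])"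
    by (rule absolutely_integrable_continuous)
       (rule continuous_on_subset[OF continuous_on_fun_of_z[OF assms]], simp)
  then show ?thesis
    by (rule set_integrable_subset[OF _ Omega_in_sets_lebesgue Omega_subset_cbox])
qed

lemma weak_grad_set_integrable:
  assumes "weak_grad L1 L2 n Dn"
  shows "set_integrable lebesgue (Omega L1 L2) (\<lambda>x. n x $ i)"
    and "set_integrable lebesgue (Omega L1 L2) (\<lambda>x. Dn k i x)"
    and "set_integrable lebesgue (Omega L1 L2) (\<lambda>x. (n x $ i)^2)"
    and "set_integrable lebesgue (Omega L1 L2) (\<lambda>x. (Dn k i x)^2)"
    and "set_integrable lebesgue (Omega L1 L2) (\<lambda>x. n x $ j * Dn k i x)"
proof -
  have one: "set_integrable lebesgue (Omega L1 L2) (\<lambda>x. 1::real)"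
    using set_integrable_fun_of_z[of "\<lambda>_. 1"] by simp
  note L2 = set_integrable_mult_if_square_integrable
  note sq = assms[unfolded weak_grad_def]
  have one_sq: "set_integrable lebesgue (Omega L1 L2) (\<lambda>x. (1::real)^2)" using one by simp
  have one_meas: "set_borel_measurable lebesgue (Omega L1 L2) (\<lambda>x. 1::real)"
    using one unfolding set_integrable_def set_borel_measurable_def by (rule borel_measurable_integrable)
  show "set_integrable lebesgue (Omega L1 L2) (\<lambda>x. (n x $ i)^2)"
    and "set_integrable lebesgue (Omega L1 L2) (\<lambda>x. (Dn k i x)^2)"
    using sq by blast+
  show "set_integrable lebesgue (Omega L1 L2) (\<lambda>x. n x $ i)"
    using L2[OF _ one_meas _ one_sq] sq by fastforce
  show "set_integrable lebesgue (Omega L1 L2) (\<lambda>x. Dn k i x)"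
    using L2[OF _ one_meas _ one_sq, of "Dn k i"] sq by fastforce
  show "set_integrable lebesgue (Omega L1 L2) (\<lambda>x. n x $ j * Dn k i x)"
    using L2[of lebesgue "Omega L1 L2" "\<lambda>x. n x $ j" "Dn k i"] sq by blast
qed

lemma set_integrable_mult_fun_of_z:
  fixes h :: "real \<Rightarrow> real" and f :: "real^3 \<Rightarrow> real"
  assumes "continuous_on UNIV h" and "set_integrable lebesgue (Omega L1 L2) f"
  shows "set_integrable lebesgue (Omega L1 L2) (\<lambda>x. f x * h (x$3))"
proof -
  note cont = continuous_on_fun_of_z[OF assms(1)]
  have "bounded ((\<lambda>x::real^3. h (x$3)) ` cbox (vector [-L1, -L2, 0]) (vector [L1, L2, 1]))"
    by (intro compact_imp_bounded compact_continuous_image continuous_on_subset[OF cont]) auto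
  then have "bounded ((\<lambda>x. h (x$3)) ` Omega L1 L2)"
    by (rule bounded_subset) (use Omega_subset_cbox in blast)
  then have "(\<lambda>x. h (x$3) * f x) absolutely_integrable_on Omega L1 L2"
    using absolutely_integrable_bounded_measurable_product[OF bilinear_times
        continuous_imp_measurable_on_sets_lebesgue[OF continuous_on_subset[OF cont] Omega_in_sets_lebesgue]
        Omega_in_sets_lebesgue] assms(2) by auto
  then show ?thesis by (simp add: mult.commute)
qed

lemma set_integral_sum:
  fixes f :: "'i \<Rightarrow> 'a \<Rightarrow> real"
  assumes "\<And>i. i \<in> I \<Longrightarrow> set_integrable M S (f i)"
  shows "set_integrable M S (\<lambda>x. \<Sum>i\<in>I. f i x)"
    and "(LINT x:S|M. (\<Sum>i\<in>I. f i x)) = (\<Sum>i\<in>I. LINT x:S|M. f i x)"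
  using assms unfolding set_integrable_def set_lebesgue_integral_def scaleR_sum_right
  by (auto intro!: integral_sum)

lemma has_real_derivative_fun_of_z_along_axis:
  fixes x :: "real^3"
  assumes "(h has_real_derivative h' (x$3)) (at (x$3))"
  shows "((\<lambda>s. h ((x + s *\<^sub>R axis k 1) $ 3)) has_real_derivative (if k = 3 then h' (x$3) else 0)) (at 0)"
proof (cases "k = 3")
  case True
  have "((\<lambda>s. h (x$3 + s)) has_real_derivative h' (x$3) * 1) (at 0)"
    by (rule DERIV_chain2[where f=h]) (use assms in \<open>auto intro!: derivative_eq_intros\<close>)
  then show ?thesis using True by (simp add: axis_def)
qed (simp add: axis_def)

lemma pd_fun_of_z:
  assumes "\<And>z. (h has_real_derivative h' z) (at z)"
  shows "pd k (\<lambda>p. h (p$3)) x = (if k = 3 then h' (x$3) else 0)"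
  unfolding pd_def by (rule DERIV_imp_deriv has_real_derivative_fun_of_z_along_axis assms)+

lemma C1_fun_fun_of_z:
  assumes "\<And>z. (h has_real_derivative h' z) (at z)" and "continuous_on UNIV h'"
  shows "C1_fun (\<lambda>p. h (p$3))"
  unfolding C1_fun_def real_differentiable_def
proof (intro conjI allI)
  fix k and x :: "real^3"
  show "\<exists>D. ((\<lambda>s. h ((x + s *\<^sub>R axis k 1) $ 3)) has_real_derivative D) (at 0)"
    using has_real_derivative_fun_of_z_along_axis[where h=h and h'=h', OF assms(1)] by blast
next
  fix k :: 3
  have "pd k (\<lambda>p. h (p$3)) = (\<lambda>x. if k = 3 then h' (x$3) else 0)"
    using pd_fun_of_z[OF assms(1)] by blast
  then show "continuous_on UNIV (pd k (\<lambda>p. h (p$3)))"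
    by (cases "k = 3") (simp_all add: continuous_on_fun_of_z[OF assms(2)])
qed

lemma pd_cong_open:
  assumes "open S" "x \<in> S" "\<And>y. y \<in> S \<Longrightarrow> f y = g y"
  shows "pd k f x = pd k g x"
proof -
  obtain e where "0 < e" "ball x e \<subseteq> S" using assms(1,2) openE by blast
  then have "\<forall>\<^sub>F s in nhds 0. f (x + s *\<^sub>R axis k 1) = g (x + s *\<^sub>R axis k 1)"
    unfolding eventually_nhds_metric using assms(3)
    by (intro exI[of _ e]) (auto simp: dist_norm subset_iff)
  then show ?thesis unfolding pd_def by (rule deriv_cong_ev) simp
qed

lemma cgrad_eq_on_open:
  assumes "open S" "x \<in> S" "\<And>y. y \<in> S \<Longrightarrow> f y = N (y$3)"
    and "\<And>i z. ((\<lambda>z. N z $ i) has_real_derivative N' z $ i) (at z)"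
  shows "cgrad f k i x = (if k = 3 then N' (x$3) $ i else 0)"
  unfolding cgrad_def
  using pd_cong_open[OF assms(1,2), of "\<lambda>p. f p $ i" "\<lambda>p. N (p$3) $ i"] assms(3)
    pd_fun_of_z[where h="\<lambda>z. N z $ i", OF assms(4)] by simp

lemma face_int_fun_of_z:
  assumes "0 \<le> L1" "0 \<le> L2"
  shows "face_int L1 L2 (\<lambda>p. h (p$3)) c = 4 * L1 * L2 * h c"
  using assms unfolding face_int_def by simp

lemma in_A_test_fun_of_z:
  assumes "in_A L1 L2 n Dn" "0 \<le> L1" "0 \<le> L2"
    and "\<And>z. (h has_real_derivative h' z) (at z)" "continuous_on UNIV h'"
  shows "k \<noteq> 3 \<Longrightarrow> (LINT x:Omega L1 L2|lebesgue. Dn k i x * h (x$3)) = 0"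
    and "(LINT x:Omega L1 L2|lebesgue. n x $ i * h' (x$3) + Dn 3 i x * h (x$3))
          = 4 * L1 * L2 * (axis 3 1 $ i * h 1 - axis 1 1 $ i * h 0)"
proof -
  have periodic: "\<forall>x. (\<lambda>p::real^3. h (p$3)) (x + c *\<^sub>R axis j 1) = h (x$3)" if "j \<noteq> 3" for c j
    using that by (simp add: axis_def)
  have "C1_fun (\<lambda>p. h (p$3))" by (rule C1_fun_fun_of_z[OF assms(4,5)])
  then have gauss_green:
    "(LINT x:Omega L1 L2|lebesgue. n x $ i * pd 1 (\<lambda>p. h (p$3)) x + Dn 1 i x * h (x$3)) = 0 \<and>
     (LINT x:Omega L1 L2|lebesgue. n x $ i * pd 2 (\<lambda>p. h (p$3)) x + Dn 2 i x * h (x$3)) = 0 \<and>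
     (LINT x:Omega L1 L2|lebesgue. n x $ i * pd 3 (\<lambda>p. h (p$3)) x + Dn 3 i x * h (x$3))
       = face_int L1 L2 (\<lambda>p. (axis 3 1 :: real^3) $ i * h (p$3)) 1
         - face_int L1 L2 (\<lambda>p. (axis 1 1 :: real^3) $ i * h (p$3)) 0"
    using assms(1) periodic[of 1] periodic[of 2] unfolding in_A_def by simp
  note pd_h = pd_fun_of_z[OF assms(4)]
  show "(LINT x:Omega L1 L2|lebesgue. Dn k i x * h (x$3)) = 0" if "k \<noteq> 3"
    using gauss_green exhaust_3[of k] that by (auto simp: pd_h)
  show "(LINT x:Omega L1 L2|lebesgue. n x $ i * h' (x$3) + Dn 3 i x * h (x$3))
          = 4 * L1 * L2 * (axis 3 1 $ i * h 1 - axis 1 1 $ i * h 0)"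
    using gauss_green face_int_fun_of_z[OF assms(2,3), of "\<lambda>z. (axis 3 1 :: real^3) $ i * h z" 1]
      face_int_fun_of_z[OF assms(2,3), of "\<lambda>z. (axis 1 1 :: real^3) $ i * h z" 0]
    by (simp add: pd_h algebra_simps)
qed

definition energy_density ::
  "real \<Rightarrow> (real^3 \<Rightarrow> real^3) \<Rightarrow> (3 \<Rightarrow> 3 \<Rightarrow> real^3 \<Rightarrow> real) \<Rightarrow> real^3 \<Rightarrow> real" where
  "energy_density t n Dn x = gradsq Dn x + 2 * t * (n x \<bullet> curl Dn x)"

definition grad_inner ::
  "(3 \<Rightarrow> 3 \<Rightarrow> real^3 \<Rightarrow> real) \<Rightarrow> (3 \<Rightarrow> 3 \<Rightarrow> real^3 \<Rightarrow> real) \<Rightarrow> real^3 \<Rightarrow> real" where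
  "grad_inner Du Dv x = (\<Sum>k\<in>UNIV. \<Sum>i\<in>UNIV. Du k i x * Dv k i x)"

text \<open>Half the derivative at \<open>s = 0\<close> of \<open>\<integral> energy_density (m + s n) - lam |m + s n|\<^sup>2\<close>.\<close>

definition first_variation_density ::
  "real \<Rightarrow> (real^3 \<Rightarrow> real) \<Rightarrow> (real^3 \<Rightarrow> real^3) \<Rightarrow> (3 \<Rightarrow> 3 \<Rightarrow> real^3 \<Rightarrow> real)
    \<Rightarrow> (real^3 \<Rightarrow> real^3) \<Rightarrow> (3 \<Rightarrow> 3 \<Rightarrow> real^3 \<Rightarrow> real) \<Rightarrow> real^3 \<Rightarrow> real" where
  "first_variation_density t lam m Dm n Dn x =
     grad_inner Dn Dm x + t * (n x \<bullet> curl Dm x + m x \<bullet> curl Dn x) - lam x * (n x \<bullet> m x)"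

lemma set_integrable_energy_density:
  assumes "weak_grad L1 L2 n Dn"
  shows "set_integrable lebesgue (Omega L1 L2) (energy_density t n Dn)"
proof -
  note L2 = weak_grad_set_integrable[OF assms]
  have "energy_density t n Dn = (\<lambda>x. (\<Sum>k\<in>UNIV. \<Sum>i\<in>UNIV. (Dn k i x)^2)
      + 2 * t * (n x $ 1 * Dn 2 3 x - n x $ 1 * Dn 3 2 x + n x $ 2 * Dn 3 1 x - n x $ 2 * Dn 1 3 x
        + n x $ 3 * Dn 1 2 x - n x $ 3 * Dn 2 1 x))"
    by (auto simp: energy_density_def gradsq_def curl_def inner_vec_def sum_3 algebra_simps)
  moreover have "set_integrable lebesgue (Omega L1 L2) (\<lambda>x. \<Sum>k\<in>UNIV. \<Sum>i\<in>UNIV. (Dn k i x)^2)"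
    by (intro set_integral_sum(1) L2(4))
  ultimately show ?thesis
    by (simp add: L2(5) set_integral_add(1) set_integral_diff(1))
qed

lemma curl_diff: "curl (\<lambda>k i x. Du k i x - Dv k i x) x = curl Du x - curl Dv x"
  by (simp add: curl_def vec_eq_iff forall_3)

lemma gradsq_diff:
  "gradsq (\<lambda>k i x. Du k i x - Dv k i x) x = gradsq Du x - 2 * grad_inner Du Dv x + gradsq Dv x"
  by (simp add: gradsq_def grad_inner_def power2_diff sum.distrib sum_subtractf sum_distrib_left mult.assoc)

lemma energy_density_diff:
  fixes t :: real and m :: "real^3 \<Rightarrow> real^3" and Dm :: "3 \<Rightarrow> 3 \<Rightarrow> real^3 \<Rightarrow> real"
  defines "lam \<equiv> energy_density t m Dm"
  assumes unit: "norm (m x) = 1"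
  shows "energy_density t (\<lambda>x. n x - m x) (\<lambda>k i x. Dn k i x - Dm k i x) x - lam x * (norm (n x - m x))^2
    = energy_density t n Dn x - energy_density t m Dm x
      - 2 * first_variation_density t lam m Dm n Dn x - lam x * ((norm (n x))^2 - 1)"
proof -
  have "m x \<bullet> m x = 1" using unit by (simp add: power2_norm_eq_inner[symmetric])
  then show ?thesis
    unfolding lam_def energy_density_def first_variation_density_def curl_diff gradsq_diff
    by (simp add: power2_norm_eq_inner inner_diff_left inner_diff_right inner_commute algebra_simps)
qed

lemma Ifun_diff_eq_Hfun_if_first_variation_vanishes:
  fixes t :: real and m :: "real^3 \<Rightarrow> real^3" and Dm :: "3 \<Rightarrow> 3 \<Rightarrow> real^3 \<Rightarrow> real"
  defines "lam \<equiv> energy_density t m Dm"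
  assumes unit_m: "\<And>x. x \<in> Omega L1 L2 \<Longrightarrow> norm (m x) = 1"
    and unit_n: "AE x in lebesgue. x \<in> Omega L1 L2 \<longrightarrow> norm (n x) = 1"
    and int_n: "set_integrable lebesgue (Omega L1 L2) (energy_density t n Dn)"
    and int_m: "set_integrable lebesgue (Omega L1 L2) lam"
    and int_W: "set_integrable lebesgue (Omega L1 L2) (first_variation_density t lam m Dm n Dn)"
    and int_E: "set_integrable lebesgue (Omega L1 L2) (\<lambda>x. lam x * ((norm (n x))^2 - 1))"
    and critical: "(LINT x:Omega L1 L2|lebesgue. first_variation_density t lam m Dm n Dn x) = 0"
  shows "Ifun L1 L2 t n Dn - Ifun L1 L2 t m Dm
    = Hfun L1 L2 t lam (\<lambda>x. n x - m x) (\<lambda>k i x. Dn k i x - Dm k i x)"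
proof -
  let ?S = "Omega L1 L2"
  let ?W = "first_variation_density t lam m Dm n Dn"
  have const: "set_integrable lebesgue ?S (\<lambda>x. t^2)"
    using set_integrable_fun_of_z[of "\<lambda>_. t^2"] by simp
  have E_zero: "(LINT x:?S|lebesgue. lam x * ((norm (n x))^2 - 1)) = 0"
    unfolding set_lebesgue_integral_def by (rule integral_eq_zero_AE) (use unit_n in auto)
  have "Hfun L1 L2 t lam (\<lambda>x. n x - m x) (\<lambda>k i x. Dn k i x - Dm k i x)
      = (LINT x:?S|lebesgue. energy_density t n Dn x - lam x - 2 * ?W x - lam x * ((norm (n x))^2 - 1))"
    unfolding Hfun_def
  proof (rule set_lebesgue_integral_cong[OF Omega_in_sets_lebesgue], intro allI impI)
    fix x assume "x \<in> ?S"
    show "gradsq (\<lambda>k i x. Dn k i x - Dm k i x) x + 2 * t * ((n x - m x) \<bullet> curl (\<lambda>k i x. Dn k i x - Dm k i x) x)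
        - lam x * (norm (n x - m x))^2
      = energy_density t n Dn x - lam x - 2 * ?W x - lam x * ((norm (n x))^2 - 1)"
      using energy_density_diff[where t=t and m=m and Dm=Dm and n=n and Dn=Dn, OF unit_m[OF \<open>x \<in> ?S\<close>]]
      unfolding lam_def energy_density_def by simp
  qed
  also have "\<dots> = (LINT x:?S|lebesgue. energy_density t n Dn x) - (LINT x:?S|lebesgue. lam x)"
    using int_n int_m int_W int_E critical E_zero by simp
  also have "\<dots> = Ifun L1 L2 t n Dn - Ifun L1 L2 t m Dm"
    using int_n int_m const unfolding Ifun_def lam_def energy_density_def by simp
  finally show ?thesis ..
qed

lemma continuous_on_if_componentwise_has_real_derivative:
  fixes N :: "real \<Rightarrow> real^'n"
  assumes "\<And>i z. ((\<lambda>z. N z $ i) has_real_derivative N' z $ i) (at z)"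
  shows "continuous_on UNIV N"
proof -
  have "continuous_on UNIV (\<lambda>z. N z $ i)" for i
    using assms DERIV_isCont continuous_at_imp_continuous_on by blast
  then have "continuous_on UNIV (\<lambda>z. \<chi> i. N z $ i)" by (rule continuous_on_vec_lambda)
  then show ?thesis by simp
qed

lemma inner_derivative_eq_0_if_unit:
  fixes N :: "real \<Rightarrow> real^'n"
  assumes "\<And>i z. ((\<lambda>z. N z $ i) has_real_derivative N' z $ i) (at z)" and "\<And>z. norm (N z) = 1"
  shows "N z \<bullet> N' z = 0"
proof -
  have "((\<lambda>z. \<Sum>i\<in>UNIV. N z $ i * N z $ i) has_real_derivative
      (\<Sum>i\<in>UNIV. N' z $ i * N z $ i + N z $ i * N' z $ i)) (at z)"
    by (auto intro!: derivative_eq_intros assms(1))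
  moreover have "(\<lambda>z. \<Sum>i\<in>UNIV. N z $ i * N z $ i) = (\<lambda>z. 1)"
  proof
    fix z have "N z \<bullet> N z = 1" using assms(2) norm_eq_1 by blast
    then show "(\<Sum>i\<in>UNIV. N z $ i * N z $ i) = 1" by (simp add: inner_vec_def)
  qed
  ultimately have "(\<Sum>i\<in>UNIV. N' z $ i * N z $ i + N z $ i * N' z $ i) = 0"
    using DERIV_const DERIV_unique by metis
  then show ?thesis by (simp add: inner_vec_def sum.distrib sum_distrib_left[symmetric])
qed

lemma curl_profile:
  assumes "\<And>k i. Dm k i x = (if k = 3 then a' $ i else 0)"
  shows "curl Dm x = axis 3 1 \<times> a'"
  using assms by (simp add: curl_def cross3_simps axis_def)

lemma energy_density_profile:
  assumes "m x = a" and "\<And>k i. Dm k i x = (if k = 3 then a' $ i else 0)"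
  shows "energy_density t m Dm x = (norm a')^2 + 2 * t * (a \<bullet> (axis 3 1 \<times> a'))"
  using assms curl_profile[of Dm x a', OF assms(2)]
  unfolding energy_density_def gradsq_def power2_norm_eq_inner
  by (simp add: inner_vec_def sum_3 power2_eq_square)

lemma first_variation_density_profile:
  assumes "m x = a" and "\<And>k i. Dm k i x = (if k = 3 then a' $ i else 0)"
  shows "first_variation_density t lam m Dm n Dn x
    = (\<Sum>i\<in>UNIV. n x $ i * (t *\<^sub>R (axis 3 1 \<times> a') - lam x *\<^sub>R a) $ i
                  + Dn 3 i x * (a' - t *\<^sub>R (axis 3 1 \<times> a)) $ i)
      + t * (Dn 2 3 x * a $ 1 - Dn 1 3 x * a $ 2 + Dn 1 2 x * a $ 3 - Dn 2 1 x * a $ 3)"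
  using assms curl_profile[of Dm x a', OF assms(2)]
  by (simp add: first_variation_density_def grad_inner_def curl_def inner_vec_def sum_3
      cross3_simps axis_def algebra_simps)

lemma has_real_derivative_cross_e3_component:
  assumes "\<And>i. ((\<lambda>z. F z $ i) has_real_derivative F' z $ i) (at z)"
  shows "((\<lambda>z. (axis 3 1 \<times> F z) $ i) has_real_derivative (axis 3 1 \<times> F' z) $ i) (at z)"
  using exhaust_3[of i] assms by (auto simp: cross3_simps axis_def intro!: derivative_eq_intros)

text \<open>\<open>N'' = 2t e\<^sub>3 \<times> N' - \<lambda> N\<close> is the Euler-Lagrange equation of
  \<open>\<integral> |N'|\<^sup>2 + 2t N \<bullet> (e\<^sub>3 \<times> N')\<close> on the sphere, \<open>\<lambda>\<close> being the multiplier of \<open>|N| = 1\<close>.\<close>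

definition lagrange_multiplier :: "real \<Rightarrow> (real \<Rightarrow> real^3) \<Rightarrow> (real \<Rightarrow> real^3) \<Rightarrow> real \<Rightarrow> real" where
  "lagrange_multiplier t N N' z = (norm (N' z))^2 + 2 * t * (N z \<bullet> (axis 3 1 \<times> N' z))"

locale critical_profile =
  fixes t :: real and N N' :: "real \<Rightarrow> real^3"
  assumes N_deriv: "\<And>i z. ((\<lambda>z. N z $ i) has_real_derivative N' z $ i) (at z)"
    and Euler_Lagrange: "\<And>i z. ((\<lambda>z. N' z $ i) has_real_derivative
          (2 * t *\<^sub>R (axis 3 1 \<times> N' z) - lagrange_multiplier t N N' z *\<^sub>R N z) $ i) (at z)"
    and unit: "\<And>z. norm (N z) = 1"
    and N0: "N 0 = axis 1 1" and N1: "N 1 = axis 3 1"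
begin

lemma continuous_on_N: "continuous_on UNIV N"
  by (rule continuous_on_if_componentwise_has_real_derivative[OF N_deriv])

lemma continuous_on_N': "continuous_on UNIV N'"
  by (rule continuous_on_if_componentwise_has_real_derivative[OF Euler_Lagrange])

lemma continuous_on_lagrange_multiplier: "continuous_on UNIV (lagrange_multiplier t N N')"
  using continuous_on_N continuous_on_N' unfolding lagrange_multiplier_def[abs_def]
  by (intro continuous_intros continuous_on_cross)

text \<open>\<open>z_flux\<close> is the coefficient of \<open>\<partial>\<^sub>z n\<close> in the first variation at \<open>N\<close>.\<close>

definition z_flux :: "real \<Rightarrow> real^3" where
  "z_flux z = N' z - t *\<^sub>R (axis 3 1 \<times> N z)"

definition z_flux_deriv :: "real \<Rightarrow> real^3" where
  "z_flux_deriv z = t *\<^sub>R (axis 3 1 \<times> N' z) - lagrange_multiplier t N N' z *\<^sub>R N z"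

lemma z_flux_has_derivative: "((\<lambda>z. z_flux z $ i) has_real_derivative z_flux_deriv z $ i) (at z)"
  unfolding z_flux_def z_flux_deriv_def
  using Euler_Lagrange[of i z]
    has_real_derivative_cross_e3_component[where F=N and F'=N' and z=z and i=i, OF N_deriv]
  by (auto intro!: derivative_eq_intros simp: algebra_simps)

lemma continuous_on_z_flux: "continuous_on UNIV (\<lambda>z. z_flux z $ i)"
  using z_flux_has_derivative DERIV_isCont continuous_at_imp_continuous_on by blast

lemma continuous_on_z_flux_deriv: "continuous_on UNIV (\<lambda>z. z_flux_deriv z $ i)"
  using continuous_on_N continuous_on_N' continuous_on_lagrange_multiplier unfolding z_flux_deriv_def
  by (intro continuous_intros continuous_on_cross)

lemma z_flux_boundary: "z_flux 1 $ 3 = 0" "z_flux 0 $ 1 = 0"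
proof -
  have "z_flux 1 $ 3 = N 1 \<bullet> N' 1" "z_flux 0 $ 1 = N 0 \<bullet> N' 0"
    unfolding z_flux_def N0 N1 by (simp_all add: cross3_simps axis_def inner_vec_def sum_3)
  then show "z_flux 1 $ 3 = 0" "z_flux 0 $ 1 = 0"
    using inner_derivative_eq_0_if_unit[OF N_deriv unit] by simp_all
qed

lemma first_variation_density_eq:
  assumes "m x = N (x$3)" and "\<And>k i. Dm k i x = (if k = 3 then N' (x$3) $ i else 0)"
  shows "first_variation_density t (energy_density t m Dm) m Dm n Dn x
    = (\<Sum>i\<in>UNIV. n x $ i * z_flux_deriv (x$3) $ i + Dn 3 i x * z_flux (x$3) $ i)
      + t * (Dn 2 3 x * N (x$3) $ 1 - Dn 1 3 x * N (x$3) $ 2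
             + Dn 1 2 x * N (x$3) $ 3 - Dn 2 1 x * N (x$3) $ 3)"
proof -
  have "energy_density t m Dm x = lagrange_multiplier t N N' (x$3)"
    unfolding lagrange_multiplier_def
    by (rule energy_density_profile[where m=m and Dm=Dm and a'="N' (x$3)", OF assms])
  then show ?thesis
    unfolding z_flux_def z_flux_deriv_def
    by (simp add: first_variation_density_profile[where m=m and Dm=Dm and a'="N' (x$3)", OF assms])
qed

lemma first_variation_vanishes:
  assumes "0 \<le> L1" "0 \<le> L2" and n: "in_A L1 L2 n Dn"
    and m: "\<And>x. x \<in> Omega L1 L2 \<Longrightarrow> m x = N (x$3)"
    and Dm: "\<And>x k i. x \<in> Omega L1 L2 \<Longrightarrow> Dm k i x = (if k = 3 then N' (x$3) $ i else 0)"
  shows "set_integrable lebesgue (Omega L1 L2) (first_variation_density t (energy_density t m Dm) m Dm n Dn)"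
    and "(LINT x:Omega L1 L2|lebesgue. first_variation_density t (energy_density t m Dm) m Dm n Dn x) = 0"
proof -
  let ?S = "Omega L1 L2"
  let ?W = "first_variation_density t (energy_density t m Dm) m Dm n Dn"
  define vertical where "vertical i x = n x $ i * z_flux_deriv (x$3) $ i + Dn 3 i x * z_flux (x$3) $ i"
    for i x
  have wg: "weak_grad L1 L2 n Dn" using n unfolding in_A_def by blast
  have int_vertical: "set_integrable lebesgue ?S (vertical i)" for i
    using set_integrable_mult_fun_of_z[OF continuous_on_z_flux_deriv weak_grad_set_integrable(1)[OF wg]]
      set_integrable_mult_fun_of_z[OF continuous_on_z_flux weak_grad_set_integrable(2)[OF wg]]
    unfolding vertical_def by (rule set_integral_add(1))
  have int_horizontal: "set_integrable lebesgue ?S (\<lambda>x. Dn k i x * N (x$3) $ j)" for k i j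
    by (rule set_integrable_mult_fun_of_z[where h="\<lambda>z. N z $ j",
          OF continuous_on_component[OF continuous_on_N] weak_grad_set_integrable(2)[OF wg]])
  have W_eq: "?W x = (\<Sum>i\<in>UNIV. vertical i x) + t * (Dn 2 3 x * N (x$3) $ 1 - Dn 1 3 x * N (x$3) $ 2
      + Dn 1 2 x * N (x$3) $ 3 - Dn 2 1 x * N (x$3) $ 3)" (is "_ = ?R x") if "x \<in> ?S" for x
    unfolding vertical_def
    using first_variation_density_eq[where m=m and Dm=Dm and n=n and Dn=Dn, OF m[OF that] Dm[OF that]] .
  have int_R: "set_integrable lebesgue ?S ?R"
    by (intro set_integral_add(1) set_integrable_mult_right set_integral_diff(1) int_horizontal
        set_integral_sum(1) int_vertical)
  moreover have "set_integrable lebesgue ?S ?W = set_integrable lebesgue ?S ?R"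
    by (rule set_integrable_cong) (simp_all add: W_eq)
  ultimately show "set_integrable lebesgue ?S ?W" by simp
  have vertical: "(LINT x:?S|lebesgue. vertical i x)
      = 4 * L1 * L2 * (axis 3 1 $ i * z_flux 1 $ i - axis 1 1 $ i * z_flux 0 $ i)" for i
    unfolding vertical_def
    by (rule in_A_test_fun_of_z(2)[OF n \<open>0 \<le> L1\<close> \<open>0 \<le> L2\<close>
          z_flux_has_derivative continuous_on_z_flux_deriv])
  have horizontal: "(LINT x:?S|lebesgue. Dn k i x * N (x$3) $ j) = 0" if "k \<noteq> 3" for k i j
    by (rule in_A_test_fun_of_z(1)[OF n \<open>0 \<le> L1\<close> \<open>0 \<le> L2\<close> N_deriv
          continuous_on_component[OF continuous_on_N'] that])
  have "(LINT x:?S|lebesgue. ?W x) = (LINT x:?S|lebesgue. ?R x)"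
    by (rule set_lebesgue_integral_cong[OF Omega_in_sets_lebesgue]) (simp add: W_eq)
  also have "\<dots> = (\<Sum>i\<in>UNIV. LINT x:?S|lebesgue. vertical i x)
        + t * ((LINT x:?S|lebesgue. Dn 2 3 x * N (x$3) $ 1) - (LINT x:?S|lebesgue. Dn 1 3 x * N (x$3) $ 2)
          + (LINT x:?S|lebesgue. Dn 1 2 x * N (x$3) $ 3) - (LINT x:?S|lebesgue. Dn 2 1 x * N (x$3) $ 3))"
    by (simp only: set_integral_add(2) set_integral_diff(2) set_integral_mult_right set_integral_sum(2)
        set_integral_add(1) set_integral_diff(1) set_integrable_mult_right set_integral_sum(1)
        int_vertical int_horizontal)
  also have "\<dots> = 4 * L1 * L2 * (z_flux 1 $ 3 - z_flux 0 $ 1)"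
    by (simp add: vertical horizontal sum_3 axis_def algebra_simps)
  finally show "(LINT x:?S|lebesgue. ?W x) = 0" using z_flux_boundary by simp
qed

lemma Ifun_diff_eq_Hfun:
  assumes "0 \<le> L1" "0 \<le> L2" and n: "in_A L1 L2 n Dn"
    and m: "\<And>x. x \<in> Omega L1 L2 \<Longrightarrow> m x = N (x$3)"
    and Dm: "\<And>x k i. x \<in> Omega L1 L2 \<Longrightarrow> Dm k i x = (if k = 3 then N' (x$3) $ i else 0)"
  shows "Ifun L1 L2 t n Dn - Ifun L1 L2 t m Dm
    = Hfun L1 L2 t (energy_density t m Dm) (\<lambda>x. n x - m x) (\<lambda>k i x. Dn k i x - Dm k i x)"
proof (rule Ifun_diff_eq_Hfun_if_first_variation_vanishes)
  let ?S = "Omega L1 L2"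
  have wg: "weak_grad L1 L2 n Dn" using n unfolding in_A_def by blast
  have lam: "energy_density t m Dm x = lagrange_multiplier t N N' (x$3)" if "x \<in> ?S" for x
    unfolding lagrange_multiplier_def by (rule energy_density_profile) (use m Dm that in auto)
  show "norm (m x) = 1" if "x \<in> ?S" for x using m[OF that] unit by simp
  show "AE x in lebesgue. x \<in> ?S \<longrightarrow> norm (n x) = 1" using n unfolding in_A_def by blast
  show "set_integrable lebesgue ?S (energy_density t n Dn)"
    by (rule set_integrable_energy_density[OF wg])
  have "set_integrable lebesgue ?S (\<lambda>x. lagrange_multiplier t N N' (x$3))"
    by (rule set_integrable_fun_of_z[OF continuous_on_lagrange_multiplier])
  moreover have "set_integrable lebesgue ?S (energy_density t m Dm)
      = set_integrable lebesgue ?S (\<lambda>x. lagrange_multiplier t N N' (x$3))"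
    by (rule set_integrable_cong) (simp_all add: lam)
  ultimately show "set_integrable lebesgue ?S (energy_density t m Dm)" by simp
  have "set_integrable lebesgue ?S (\<lambda>x. ((\<Sum>i\<in>UNIV. (n x $ i)^2) - 1) * lagrange_multiplier t N N' (x$3))"
    by (intro set_integrable_mult_fun_of_z[OF continuous_on_lagrange_multiplier] set_integral_diff(1) set_integral_sum(1)
        weak_grad_set_integrable(3)[OF wg] set_integrable_fun_of_z[of "\<lambda>_. 1", simplified])
  moreover have norm_squared_eq: "(norm (n x))^2 = (\<Sum>i\<in>UNIV. (n x $ i)^2)" for x
    unfolding power2_norm_eq_inner inner_vec_def by (simp add: power2_eq_square)
  moreover have "set_integrable lebesgue ?S (\<lambda>x. energy_density t m Dm x * ((norm (n x))^2 - 1))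
      = set_integrable lebesgue ?S (\<lambda>x. ((\<Sum>i\<in>UNIV. (n x $ i)^2) - 1) * lagrange_multiplier t N N' (x$3))"
    by (rule set_integrable_cong) (simp_all add: lam norm_squared_eq)
  ultimately show "set_integrable lebesgue ?S (\<lambda>x. energy_density t m Dm x * ((norm (n x))^2 - 1))"
    by simp
  show "set_integrable lebesgue ?S (first_variation_density t (energy_density t m Dm) m Dm n Dn)"
    and "(LINT x:?S|lebesgue. first_variation_density t (energy_density t m Dm) m Dm n Dn x) = 0"
    using first_variation_vanishes[OF assms] by simp_all
qed

end

definition twisted_profile :: "real \<Rightarrow> (real \<Rightarrow> real) \<Rightarrow> real \<Rightarrow> real^3" where
  "twisted_profile t \<phi> z = vector [cos (\<phi> z) * cos (t * z), cos (\<phi> z) * sin (t * z), sin (\<phi> z)]"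

lemma critical_profile_twisted_profile:
  fixes \<phi> \<phi>' :: "real \<Rightarrow> real"
  assumes \<phi>': "\<And>z. (\<phi> has_real_derivative \<phi>' z) (at z)"
    and \<phi>'': "\<And>z. (\<phi>' has_real_derivative t^2 * cos (\<phi> z) * sin (\<phi> z)) (at z)"
    and "\<phi> 0 = 0" "\<phi> 1 = pi / 2"
  obtains N' where "critical_profile t (twisted_profile t \<phi>) N'"
proof
  define N' where "N' z = (vector [- sin (\<phi> z) * \<phi>' z * cos (t * z) - t * cos (\<phi> z) * sin (t * z),
      - sin (\<phi> z) * \<phi>' z * sin (t * z) + t * cos (\<phi> z) * cos (t * z), cos (\<phi> z) * \<phi>' z]
    :: real^3)" for z
  have trig: "(sin (\<phi> z))^2 + (cos (\<phi> z))^2 = 1" "(sin (t * z))^2 + (cos (t * z))^2 = 1" for z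
    by simp_all
  have lam: "lagrange_multiplier t (twisted_profile t \<phi>) N' z = (\<phi>' z)^2 - t^2 * (cos (\<phi> z))^2" for z
    unfolding lagrange_multiplier_def power2_norm_eq_inner
    by (simp add: N'_def twisted_profile_def cross3_simps axis_def) (use trig[of z] in algebra)
  show "critical_profile t (twisted_profile t \<phi>) N'"
  proof
    fix i z
    show "((\<lambda>z. twisted_profile t \<phi> z $ i) has_real_derivative N' z $ i) (at z)"
      using exhaust_3[of i] unfolding twisted_profile_def N'_def
      by (auto intro!: derivative_eq_intros \<phi>' simp: algebra_simps)
    have "((\<lambda>z. N' z $ i) has_real_derivative
        (2 * t *\<^sub>R (axis 3 1 \<times> N' z)
          - ((\<phi>' z)^2 - t^2 * (cos (\<phi> z))^2) *\<^sub>R twisted_profile t \<phi> z) $ i) (at z)"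
    proof -
      consider "i = 1" | "i = 2" | "i = 3" using exhaust_3 by blast
      then show ?thesis
      proof cases
        case 1
        show ?thesis unfolding 1 N'_def twisted_profile_def
          apply (simp add: cross3_simps axis_def)
          apply (rule derivative_eq_intros \<phi>' \<phi>'' refl)+
          apply (simp add: mult.commute[of z t])
          using trig[of z] by algebra
      next
        case 2
        show ?thesis unfolding 2 N'_def twisted_profile_def
          apply (simp add: cross3_simps axis_def)
          apply (rule derivative_eq_intros \<phi>' \<phi>'' refl)+
          apply (simp add: mult.commute[of z t])
          using trig[of z] by algebra
      next
        case 3
        show ?thesis unfolding 3 N'_def twisted_profile_def
          apply (simp add: cross3_simps axis_def)
          apply (rule derivative_eq_intros \<phi>' \<phi>'' refl)+
          apply (simp add: mult.commute[of z t])
          by (simp add: power2_eq_square)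
      qed
    qed
    then show "((\<lambda>z. N' z $ i) has_real_derivative
        (2 * t *\<^sub>R (axis 3 1 \<times> N' z)
          - lagrange_multiplier t (twisted_profile t \<phi>) N' z *\<^sub>R twisted_profile t \<phi> z) $ i) (at z)"
      by (simp only: lam)
  next
    fix z
    show "norm (twisted_profile t \<phi> z) = 1"
      unfolding norm_eq_1 by (simp add: twisted_profile_def inner_vec_def sum_3) (use trig[of z] in algebra)
  next
    show "twisted_profile t \<phi> 0 = axis 1 1" "twisted_profile t \<phi> 1 = axis 3 1"
      by (simp_all add: assms(3,4) twisted_profile_def vec_eq_iff forall_3 axis_def)
  qed
qed

theorem mainTheorem7:
  fixes L1 L2 t D :: real and \<theta> :: "real \<Rightarrow> real"
    and n :: "real^3 \<Rightarrow> real^3" and Dn :: "3 \<Rightarrow> 3 \<Rightarrow> real^3 \<Rightarrow> real"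
  assumes "L1 > 0" and "L2 > 0" and "t \<ge> 0"
    and "continuous_on {0..1} \<theta>"
    and "\<forall>z\<in>{0<..<1}. \<theta> differentiable (at z)
            \<and> (deriv \<theta> has_real_derivative t^2 * cos (\<theta> z) * sin (\<theta> z)) (at z)"
    and "\<theta> 0 = 0" and "\<theta> 1 = pi / 2"
    and "D > t^2"
    and "(LBINT u=0..pi/2. (D - t^2 * (cos u)^2) powr (-1/2)) = 1"
    and "\<forall>z\<in>{0..1}. (LBINT u=0..\<theta> z. (D - t^2 * (cos u)^2) powr (-1/2)) = z"
    and "in_A L1 L2 n Dn"
  shows "Ifun L1 L2 t n Dn - Ifun L1 L2 t (nstar t \<theta>) (cgrad (nstar t \<theta>))
         = Hfun L1 L2 t
             (\<lambda>x. gradsq (cgrad (nstar t \<theta>)) x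
                  + 2 * t * (nstar t \<theta> x \<bullet> curl (cgrad (nstar t \<theta>)) x))
             (\<lambda>x. n x - nstar t \<theta> x)
             (\<lambda>k i x. Dn k i x - cgrad (nstar t \<theta>) k i x)"
proof -
  \<comment> \<open>Only the integral characterisation of \<open>\<theta>\<close> is used: it extends \<open>\<theta>\<close> to a smooth \<open>G\<close> on
      all of \<open>\<real>\<close>, as the globally \<open>C\<^sup>1\<close> test functions in \<open>in_A\<close> require.\<close>
  obtain G G' where G_inv: "\<And>w::real. G (LBINT u=0..w. (D - t^2 * (cos u)^2) powr (-1/2)) = w"
    and G': "\<And>z. (G has_real_derivative G' z) (at z)"
    and G'': "\<And>z. (G' has_real_derivative t^2 * cos (G z) * sin (G z)) (at z)"
    using inverse_of_elliptic_integral[OF \<open>D > t^2\<close>] by blast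
  have \<theta>_eq_G: "\<theta> z = G z" if "z \<in> {0..1}" for z
    using G_inv[of "\<theta> z"] assms(10) that by simp
  obtain N' where "critical_profile t (twisted_profile t G) N'"
    by (rule critical_profile_twisted_profile[OF G' G'']) (use \<theta>_eq_G assms(6,7) in auto)
  then interpret critical_profile t "twisted_profile t G" N' .
  have nstar_eq: "nstar t \<theta> x = twisted_profile t G (x$3)" if "x \<in> Omega L1 L2" for x
    using that \<theta>_eq_G[of "x$3"] unfolding Omega_def nstar_def twisted_profile_def by simp
  have "cgrad (nstar t \<theta>) k i x = (if k = 3 then N' (x$3) $ i else 0)" if "x \<in> Omega L1 L2" for x k i
    by (rule cgrad_eq_on_open[OF open_Omega that nstar_eq N_deriv])
  with Ifun_diff_eq_Hfun[of L1 L2 n Dn "nstar t \<theta>" "cgrad (nstar t \<theta>)"] assms(1,2,11) nstar_eq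
  show ?thesis by (simp add: energy_density_def[abs_def])
qed

end
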